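(* Let $F>0$ and let $\{g_n\}_{n<0}$ be real numbers with $\liminf_{n\to-\infty}|n|^{-1/2}g_n>-\sqrt{F}$. Then for every $E\in\mathbb{R}$ there is a non-trivial $\psi\in L^2((-\infty,0))$ which solves $-\psi''(x)-Fx\psi(x)=E\psi(x)$ for $x\in(-\infty,0)\setminus\mathbb{Z}$, is continuous at every negative integer $n$, and satisfies $\lim_{\epsilon\to0^+}(\psi'(n+\epsilon)-\psi'(n-\epsilon))=g_n\psi(n)$ for every negative integer $n$. *)

theory Defs
  imports "HOL-Analysis.Analysis"
begin

definition L2_neg_halfline :: "(real \<Rightarrow> real) \<Rightarrow> bool" where
  "L2_neg_halfline \<psi> \<longleftrightarrow>
     \<psi> \<in> borel_measurable (restrict_space lebesgue {..<0}) \<and>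
     set_integrable lebesgue {..<(0::real)} (\<lambda>x. (\<psi> x)\<^sup>2)"

end

theory Submission
  imports Defs
begin

(* Solutions of -psi'' - F x psi = E psi are combinations of two shifted power series solutions
   with Wronskian 1.  The coefficients p of psi on [-1, 0) and the delta conditions at the
   negative integers determine a solution glued p on (-infinity, 0), linear in p.  Far to the
   left the potential dominates the couplings: with mu_n = c sqrt |n| and c < sqrt F, the liminf
   hypothesis gives mu_n^2 + mu_n <= -(F x + E) on [n - 1, n] and mu_n + g_n >= 1 for n <= -K.
   A Riccati comparison on each unit interval then propagates "psi(m) >= 0 and psi'(m) > psi(m)"
   from m to m + 1 while m < -K, with exp(-x) psi(x) nondecreasing in between.  Starting from
   psi(-N) = 0 < psi'(-N) gives, for every N, a unit vector p with exp(-x) psi(x) nondecreasing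
   on [-N, -K]; compactness of the unit circle yields one p that works for all N.  Then
   psi = O(e^x) as x -> -infinity, so psi is square integrable. *)

section \<open>Airy functions\<close>

fun airy_coeff :: "real \<Rightarrow> real \<Rightarrow> real \<Rightarrow> nat \<Rightarrow> real" where
  "airy_coeff F c0 c1 0 = c0"
| "airy_coeff F c0 c1 (Suc 0) = c1"
| "airy_coeff F c0 c1 (Suc (Suc 0)) = 0"
| "airy_coeff F c0 c1 (Suc (Suc (Suc k))) =
     - F * airy_coeff F c0 c1 k / (real (k + 3) * real (k + 2))"

lemma airy_coeff_bound:
  "(airy_coeff F c0 c1 k)\<^sup>2 * fact k \<le> (c0\<^sup>2 + c1\<^sup>2) * (max 1 (F\<^sup>2)) ^ k"
proof (induction F c0 c1 k rule: airy_coeff.induct)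
  case (1 F c0 c1)
  then show ?case by simp
next
  case (2 F c0 c1)
  have "c1\<^sup>2 \<le> (c0\<^sup>2 + c1\<^sup>2) * 1" by simp
  also have "\<dots> \<le> (c0\<^sup>2 + c1\<^sup>2) * max 1 (F\<^sup>2)" by (intro mult_left_mono) auto
  finally show ?case by simp
next
  case (3 F c0 c1)
  then show ?case by simp
next
  case (4 F c0 c1 k)
  define a where "a = airy_coeff F c0 c1 k"
  define D where "D = max 1 (F\<^sup>2)"
  have D: "1 \<le> D" "F\<^sup>2 \<le> D" by (auto simp: D_def)
  define d where "d = (real k + 3) * (real k + 2)"
  have d: "d > 0" by (simp add: d_def)
  have rec: "airy_coeff F c0 c1 (k + 3) = - F * a / d"
    by (simp add: a_def d_def eval_nat_numeral add.commute)
  have fact3: "fact (k + 3) = d * (real k + 1) * (fact k :: real)"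
    by (simp add: d_def eval_nat_numeral algebra_simps)
  have "(airy_coeff F c0 c1 (k + 3))\<^sup>2 * fact (k + 3) = F\<^sup>2 * (a\<^sup>2 * fact k) * ((real k + 1) / d)"
    unfolding rec fact3 using d by (simp add: power2_eq_square field_simps)
  also have "\<dots> \<le> F\<^sup>2 * (a\<^sup>2 * fact k)"
    using d by (intro mult_left_le) (auto simp: d_def field_simps)
  also have "\<dots> \<le> D ^ 3 * ((c0\<^sup>2 + c1\<^sup>2) * D ^ k)"
  proof (rule mult_mono)
    show "F\<^sup>2 \<le> D ^ 3"
      using D power_increasing[of 1 3 D] by simp
  qed (use "4.IH" in \<open>auto simp: a_def D_def\<close>)
  finally show ?case by (simp add: D_def power_add eval_nat_numeral algebra_simps)
qed

lemma summable_airy_coeff: "summable (\<lambda>k. airy_coeff F c0 c1 k * z ^ k)"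
proof -
  define C where "C = c0\<^sup>2 + c1\<^sup>2"
  define D where "D = max 1 (F\<^sup>2)"
  have "summable (\<lambda>k. (2 * D * z\<^sup>2) ^ k / fact k)"
    using summable_exp[of "2 * D * z\<^sup>2"] by (simp add: divide_inverse mult.commute)
  then have "summable (\<lambda>k. (C * ((2 * D * z\<^sup>2) ^ k / fact k) + (1 / 2) ^ k) / 2)"
    by (intro summable_divide summable_add summable_mult summable_geometric) auto
  then show ?thesis
  proof (rule summable_comparison_test')
    fix k :: nat
    define w where "w = airy_coeff F c0 c1 k * z ^ k"
    \<comment> \<open>AM-GM with weight \<open>2 ^ k\<close>: \<open>2 \<bar>w\<bar> \<le> 2 ^ k w\<^sup>2 + 2 ^ -k\<close>\<close>
    have "2 * \<bar>w\<bar> \<le> 2 ^ k * w\<^sup>2 + (1 / 2) ^ k"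
    proof -
      have "0 \<le> (2 ^ k * \<bar>w\<bar> - 1)\<^sup>2 / 2 ^ k" by simp
      then show ?thesis by (simp add: power2_eq_square field_simps)
    qed
    also have "2 ^ k * w\<^sup>2 \<le> C * ((2 * D * z\<^sup>2) ^ k / fact k)"
    proof -
      have "2 ^ k * w\<^sup>2 = (airy_coeff F c0 c1 k)\<^sup>2 * fact k * ((2 * z\<^sup>2) ^ k / fact k)"
        by (simp add: w_def power_mult_distrib power_mult[symmetric] mult.commute[of 2] power2_eq_square)
      also have "\<dots> \<le> C * D ^ k * ((2 * z\<^sup>2) ^ k / fact k)"
        unfolding C_def D_def by (intro mult_right_mono airy_coeff_bound) auto
      finally show ?thesis by (simp add: power_mult_distrib mult_ac)
    qed
    finally show "norm w \<le> (C * ((2 * D * z\<^sup>2) ^ k / fact k) + (1 / 2) ^ k) / 2"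
      by simp
  qed
qed

definition airy_series :: "real \<Rightarrow> real \<Rightarrow> real \<Rightarrow> real \<Rightarrow> real" where
  "airy_series F c0 c1 z = (\<Sum>k. airy_coeff F c0 c1 k * z ^ k)"

definition airy_series' :: "real \<Rightarrow> real \<Rightarrow> real \<Rightarrow> real \<Rightarrow> real" where
  "airy_series' F c0 c1 z = (\<Sum>k. diffs (airy_coeff F c0 c1) k * z ^ k)"

lemma airy_series_deriv:
  "(airy_series F c0 c1 has_real_derivative airy_series' F c0 c1 z) (at z)"
  unfolding airy_series_def[abs_def] airy_series'_def
  by (rule termdiffs_strong_converges_everywhere summable_airy_coeff)+

lemma diffs_diffs_airy_coeff:
  "diffs (diffs (airy_coeff F c0 c1)) (Suc k) = - F * airy_coeff F c0 c1 k"
proof -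
  have "diffs (diffs (airy_coeff F c0 c1)) (Suc k)
      = (real k + 3) * (real k + 2) * airy_coeff F c0 c1 (Suc (Suc (Suc k)))"
    by (simp add: diffs_def algebra_simps del: airy_coeff.simps)
  also have "\<dots> = - F * airy_coeff F c0 c1 k"
  proof -
    have "(real k + 3) * (real k + 2) \<noteq> 0" by simp
    then show ?thesis by (simp add: add.commute)
  qed
  finally show ?thesis .
qed

lemma airy_series'_deriv:
  "(airy_series' F c0 c1 has_real_derivative - F * z * airy_series F c0 c1 z) (at z)"
proof -
  let ?a = "airy_coeff F c0 c1"
  have "(airy_series' F c0 c1 has_real_derivative (\<Sum>k. diffs (diffs ?a) k * z ^ k)) (at z)"
    unfolding airy_series'_def[abs_def]
    by (rule termdiffs_strong_converges_everywhere termdiff_converges_all summable_airy_coeff)+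
  moreover have "(\<lambda>k. diffs (diffs ?a) k * z ^ k) sums (- F * z * airy_series F c0 c1 z)"
  proof -
    have "(\<lambda>k. - F * z * (?a k * z ^ k)) sums (- F * z * airy_series F c0 c1 z)"
      unfolding airy_series_def by (intro sums_mult summable_sums summable_airy_coeff)
    then have "(\<lambda>k. diffs (diffs ?a) (Suc k) * z ^ Suc k) sums (- F * z * airy_series F c0 c1 z)"
      by (simp add: diffs_diffs_airy_coeff mult_ac)
    then show ?thesis
      using sums_Suc_iff[of "\<lambda>k. diffs (diffs ?a) k * z ^ k"] by (simp add: diffs_def)
  qed
  ultimately show ?thesis by (simp add: sums_iff)
qed

lemma airy_series_at_0: "airy_series F c0 c1 0 = c0" "airy_series' F c0 c1 0 = c1"
  unfolding airy_series_def airy_series'_def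
  by (subst suminf_finite[of "{0}"]; simp add: diffs_def)+

lemma wronskian_constant:
  fixes q u u' v v' :: "real \<Rightarrow> real"
  assumes "\<And>x. (u has_real_derivative u' x) (at x)" "\<And>x. (u' has_real_derivative q x * u x) (at x)"
    and "\<And>x. (v has_real_derivative v' x) (at x)" "\<And>x. (v' has_real_derivative q x * v x) (at x)"
  shows "u x * v' x - u' x * v x = u a * v' a - u' a * v a"
proof -
  have "((\<lambda>x. u x * v' x - u' x * v x) has_real_derivative 0) (at x)" for x
    using DERIV_diff[OF DERIV_mult'[OF assms(1,4)] DERIV_mult'[OF assms(2,3)]]
    by (simp add: algebra_simps)
  then show ?thesis by (intro DERIV_isconst_all allI)
qed

locale fundamental_system =
  fixes q y1 y1' y2 y2' :: "real \<Rightarrow> real"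
  assumes y1_deriv: "\<And>x. (y1 has_real_derivative y1' x) (at x)"
    and y1'_deriv: "\<And>x. (y1' has_real_derivative q x * y1 x) (at x)"
    and y2_deriv: "\<And>x. (y2 has_real_derivative y2' x) (at x)"
    and y2'_deriv: "\<And>x. (y2' has_real_derivative q x * y2 x) (at x)"
    and wronskian: "\<And>x. y1 x * y2' x - y1' x * y2 x = 1"

lemma airy_fundamental_system:
  fixes F E :: real
  assumes "F \<noteq> 0"
  shows "fundamental_system (\<lambda>x. - (F * x + E))
           (\<lambda>x. airy_series F 1 0 (x + E / F)) (\<lambda>x. airy_series' F 1 0 (x + E / F))
           (\<lambda>x. airy_series F 0 1 (x + E / F)) (\<lambda>x. airy_series' F 0 1 (x + E / F))"
proof -
  have shift: "((\<lambda>x. x + E / F) has_real_derivative 1) (at x)" for x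
    by (auto intro!: derivative_eq_intros)
  have d0: "((\<lambda>x. airy_series F c0 c1 (x + E / F)) has_real_derivative
             airy_series' F c0 c1 (x + E / F)) (at x)" for c0 c1 x
    using DERIV_chain2[OF airy_series_deriv shift] by simp
  have d1: "((\<lambda>x. airy_series' F c0 c1 (x + E / F)) has_real_derivative
             - (F * x + E) * airy_series F c0 c1 (x + E / F)) (at x)" for c0 c1 x
    by (rule DERIV_cong[OF DERIV_chain2[OF airy_series'_deriv shift]]) (use assms in \<open>simp add: field_simps\<close>)
  show ?thesis
  proof
    fix x
    show "airy_series F 1 0 (x + E / F) * airy_series' F 0 1 (x + E / F)
          - airy_series' F 1 0 (x + E / F) * airy_series F 0 1 (x + E / F) = 1"
      using wronskian_constant[OF d0[of 1 0] d1[of 1 0] d0[of 0 1] d1[of 0 1], where a = "- E / F"]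
      by (simp add: airy_series_at_0)
  qed (rule d0 d1)+
qed

section \<open>A Riccati comparison argument\<close>

lemma continuous_positive_on_interval_induct:
  fixes h :: "real \<Rightarrow> real"
  assumes cont: "continuous_on {a..b} h" and start: "h a > 0"
    and step: "\<And>x. a < x \<Longrightarrow> x \<le> b \<Longrightarrow> (\<And>y. a \<le> y \<Longrightarrow> y < x \<Longrightarrow> h y > 0) \<Longrightarrow> h x > 0"
    and x: "a \<le> x" "x \<le> b"
  shows "h x > 0"
proof (rule ccontr)
  assume "\<not> h x > 0"
  define Z where "Z = {y \<in> {a..b}. h y \<le> 0}"
  have "x \<in> Z" using x \<open>\<not> h x > 0\<close> by (simp add: Z_def)
  have "closed Z"
    unfolding Z_def by (rule continuous_on_closed_Collect_le) (auto intro: cont)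
  moreover have "bdd_below Z" by (rule bdd_belowI[of _ a]) (auto simp: Z_def)
  ultimately have "Inf Z \<in> Z" using \<open>x \<in> Z\<close> closed_contains_Inf by blast
  have below: "h y > 0" if "a \<le> y" "y < Inf Z" for y
  proof (rule ccontr)
    assume "\<not> h y > 0"
    then have "y \<in> Z" using that \<open>Inf Z \<in> Z\<close> by (auto simp: Z_def)
    then show False using cInf_lower[OF _ \<open>bdd_below Z\<close>, of y] that by simp
  qed
  have "a \<noteq> Inf Z" using \<open>Inf Z \<in> Z\<close> start by (auto simp: Z_def)
  then have "a < Inf Z" "Inf Z \<le> b" using \<open>Inf Z \<in> Z\<close> by (auto simp: Z_def)
  then have "h (Inf Z) > 0" by (rule step) (rule below)
  then show False using \<open>Inf Z \<in> Z\<close> by (simp add: Z_def)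
qed

lemma riccati_comparison:
  fixes \<phi> \<phi>' q :: "real \<Rightarrow> real" and a \<mu> :: real
  assumes \<phi>_deriv: "\<And>x. (\<phi> has_real_derivative \<phi>' x) (at x)"
    and \<phi>'_deriv: "\<And>x. (\<phi>' has_real_derivative q x * \<phi> x) (at x)"
    and \<mu>: "\<mu> \<ge> 1" and q: "\<And>x. a \<le> x \<Longrightarrow> x \<le> a + 1 \<Longrightarrow> q x \<ge> \<mu>\<^sup>2 + \<mu>"
    and start: "\<phi> a \<ge> 0" "\<phi>' a > \<phi> a"
    and x: "a \<le> x" "x \<le> a + 1"
  shows "\<phi> x \<ge> 0 \<and> \<phi>' x > (1 + (\<mu> - 1) * (x - a)) * \<phi> x"
proof -
  define \<kappa> where "\<kappa> = \<mu> - 1"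
  define r where "r x = 1 + \<kappa> * (x - a)" for x
  define R where "R x = (x - a) + \<kappa> * (x - a)\<^sup>2 / 2" for x
  define h where "h x = \<phi>' x - r x * \<phi> x" for x
  have r_bounds: "1 \<le> r x \<and> r x \<le> \<mu>" if "a \<le> x" "x \<le> a + 1" for x
    using that \<mu> mult_left_mono[of "x - a" 1 \<kappa>] by (auto simp: r_def \<kappa>_def)
  have R_deriv: "(R has_real_derivative r x) (at x)" for x
    unfolding R_def r_def by (auto intro!: derivative_eq_intros simp: power2_eq_square field_simps)
  have h_deriv: "(h has_real_derivative (q x - \<kappa>) * \<phi> x - r x * \<phi>' x) (at x)" for x
    unfolding h_def[abs_def] r_def
    by (auto intro!: derivative_eq_intros \<phi>_deriv \<phi>'_deriv simp: algebra_simps)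
  \<comment> \<open>\<open>exp (- R) * \<phi>\<close> grows where \<open>h > 0\<close>, and \<open>exp R * h\<close> grows where \<open>\<phi> \<ge> 0\<close>.\<close>
  have G_deriv: "((\<lambda>x. exp (- R x) * \<phi> x) has_real_derivative exp (- R x) * h x) (at x)" for x
    by (rule derivative_eq_intros R_deriv \<phi>_deriv refl)+ (simp add: h_def algebra_simps)
  have H_deriv: "((\<lambda>x. exp (R x) * h x) has_real_derivative
                   exp (R x) * ((q x - (r x)\<^sup>2 - \<kappa>) * \<phi> x)) (at x)" for x
    by (rule derivative_eq_intros R_deriv h_deriv refl)+ (simp add: h_def algebra_simps power2_eq_square)
  have \<phi>_nonneg: "\<phi> y \<ge> 0" if "a \<le> y" and h_pos: "\<And>z. a < z \<Longrightarrow> z < y \<Longrightarrow> h z > 0" for y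
  proof -
    have "exp (- R a) * \<phi> a \<le> exp (- R y) * \<phi> y"
    proof (rule DERIV_nonneg_imp_increasing_open[OF \<open>a \<le> y\<close>])
      show "continuous_on {a..y} (\<lambda>x. exp (- R x) * \<phi> x)"
        using G_deriv by (intro continuous_at_imp_continuous_on ballI DERIV_isCont) blast
    next
      fix z assume "a < z" "z < y"
      then show "\<exists>d. ((\<lambda>x. exp (- R x) * \<phi> x) has_real_derivative d) (at z) \<and> 0 \<le> d"
        using G_deriv[of z] h_pos[of z] by (intro exI[of _ "exp (- R z) * h z"]) simp
    qed
    then have "exp (- R y) * \<phi> y \<ge> 0" using start by (simp add: R_def)
    then show ?thesis by (simp add: zero_le_mult_iff)
  qed
  have h_pos: "h x > 0" if "a \<le> x" "x \<le> a + 1" for x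
  proof (rule continuous_positive_on_interval_induct[OF _ _ _ that])
    show "continuous_on {a..a + 1} h"
      using h_deriv by (intro continuous_at_imp_continuous_on ballI DERIV_isCont) blast
    show "h a > 0" using start by (simp add: h_def r_def)
  next
    fix x assume x: "a < x" "x \<le> a + 1" and IH: "\<And>y. a \<le> y \<Longrightarrow> y < x \<Longrightarrow> h y > 0"
    have "exp (R a) * h a \<le> exp (R x) * h x"
    proof (rule DERIV_nonneg_imp_nondecreasing[of a x])
      fix y assume y: "a \<le> y" "y \<le> x"
      have "(r y)\<^sup>2 \<le> \<mu>\<^sup>2" using r_bounds[of y] y x by (intro power_mono) auto
      then have "q y - (r y)\<^sup>2 - \<kappa> \<ge> 0" using q[of y] y x by (simp add: \<kappa>_def)
      moreover have "\<phi> y \<ge> 0" using \<phi>_nonneg[of y] IH y by simp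
      ultimately show "\<exists>d. ((\<lambda>x. exp (R x) * h x) has_real_derivative d) (at y) \<and> 0 \<le> d"
        using H_deriv[of y] by (intro exI[of _ "exp (R y) * ((q y - (r y)\<^sup>2 - \<kappa>) * \<phi> y)"]) simp
    qed (use x in simp)
    moreover have "0 < exp (R a) * h a" using IH[of a] x by simp
    ultimately have "exp (R x) * h x > 0" by linarith
    then show "h x > 0" by (simp add: zero_less_mult_iff)
  qed
  have "\<phi> x \<ge> 0" by (rule \<phi>_nonneg[OF x(1)]) (use h_pos x in auto)
  then show ?thesis using h_pos[OF x] by (simp add: h_def r_def \<kappa>_def)
qed

lemma mono_on_integer_pieces:
  fixes f :: "real \<Rightarrow> real" and a b :: int
  assumes "a \<le> b" and pieces: "\<And>m. a \<le> m \<Longrightarrow> m < b \<Longrightarrow> mono_on {of_int m..of_int m + 1} f"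
  shows "mono_on {of_int a..of_int b} f"
  using assms
proof (induction b rule: int_ge_induct)
  case base
  show ?case by (rule mono_onI) auto
next
  case (step b)
  have left: "mono_on {of_int a..of_int b} f" using step by simp
  have right: "mono_on {of_int b..of_int b + 1} f" using step by simp
  show ?case
  proof (rule mono_onI)
    fix x y :: real assume x: "x \<in> {of_int a..of_int (b + 1)}" and y: "y \<in> {of_int a..of_int (b + 1)}"
      and "x \<le> y"
    show "f x \<le> f y"
    proof (cases "y \<le> of_int b")
      case True
      then show ?thesis using x y \<open>x \<le> y\<close> by (intro mono_onD[OF left]) auto
    next
      case False
      show ?thesis
      proof (cases "of_int b \<le> x")
        case True
        then show ?thesis using x y \<open>x \<le> y\<close> by (intro mono_onD[OF right]) auto
      next
        case False
        then have "f x \<le> f (of_int b)" using x step(1) by (intro mono_onD[OF left]) auto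
        also have "\<dots> \<le> f y" using \<open>\<not> y \<le> of_int b\<close> y by (intro mono_onD[OF right]) auto
        finally show ?thesis .
      qed
    qed
  qed
qed

section \<open>Exponential decay and square integrability\<close>

definition exp_decaying_on :: "real set \<Rightarrow> (real \<Rightarrow> real) \<Rightarrow> bool" where
  "exp_decaying_on S f \<longleftrightarrow> (\<forall>x\<in>S. 0 \<le> f x) \<and> mono_on S (\<lambda>x. exp (- x) * f x)"

lemma exp_decaying_on_subset: "exp_decaying_on T f \<Longrightarrow> S \<subseteq> T \<Longrightarrow> exp_decaying_on S f"
  by (auto simp: exp_decaying_on_def intro: mono_on_subset)

lemma exp_decaying_on_cong:
  "exp_decaying_on S f \<Longrightarrow> (\<And>x. x \<in> S \<Longrightarrow> f x = h x) \<Longrightarrow> exp_decaying_on S h"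
  by (auto simp: exp_decaying_on_def mono_on_def)

lemma exp_decaying_on_if_le_deriv:
  assumes "\<And>x. (f has_real_derivative f' x) (at x)" and "\<And>x. x \<in> {a..b} \<Longrightarrow> 0 \<le> f x \<and> f x \<le> f' x"
  shows "exp_decaying_on {a..b} f"
  unfolding exp_decaying_on_def
proof (intro conjI ballI mono_onI)
  fix x y assume "x \<in> {a..b}" "y \<in> {a..b}" "x \<le> y"
  show "exp (- x) * f x \<le> exp (- y) * f y"
  proof (rule DERIV_nonneg_imp_nondecreasing[OF \<open>x \<le> y\<close>])
    fix z assume "x \<le> z" "z \<le> y"
    then have "0 \<le> exp (- z) * (f' z - f z)"
      using assms(2)[of z] \<open>x \<in> {a..b}\<close> \<open>y \<in> {a..b}\<close> by simp
    moreover have "((\<lambda>x. exp (- x) * f x) has_real_derivative exp (- z) * (f' z - f z)) (at z)"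
      by (rule derivative_eq_intros assms(1) refl)+ (simp add: algebra_simps)
    ultimately show "\<exists>d. ((\<lambda>x. exp (- x) * f x) has_real_derivative d) (at z) \<and> 0 \<le> d"
      by blast
  qed
qed (use assms(2) in auto)

lemma exp_decaying_on_integer_pieces:
  fixes a b :: int
  assumes "a < b" and pieces: "\<And>m. a \<le> m \<Longrightarrow> m < b \<Longrightarrow> exp_decaying_on {of_int m..of_int m + 1} f"
  shows "exp_decaying_on {of_int a..of_int b} f"
  unfolding exp_decaying_on_def
proof
  show "\<forall>x\<in>{of_int a..of_int b}. 0 \<le> f x"
  proof
    fix x :: real assume x: "x \<in> {of_int a..of_int b}"
    define m where "m = min \<lfloor>x\<rfloor> (b - 1)"
    have "a \<le> m" "m < b" "x \<in> {of_int m..of_int m + 1}"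
      using x assms(1) by (auto simp: m_def le_floor_iff min_def) linarith+
    then show "0 \<le> f x" using pieces by (auto simp: exp_decaying_on_def)
  qed
  show "mono_on {of_int a..of_int b} (\<lambda>x. exp (- x) * f x)"
    using assms by (intro mono_on_integer_pieces) (auto simp: exp_decaying_on_def)
qed

lemma integrable_on_exp_2x_neg_halfline: "(\<lambda>x::real. exp (2 * x)) integrable_on {..<0}"
proof -
  have "(\<lambda>x::real. exp (- 2 * x)) integrable_on {0..}"
    by (rule integrable_on_exp_minus_to_infinity) simp
  then have "(\<lambda>x::real. exp (- 2 * x)) absolutely_integrable_on {0..}"
    by (rule nonnegative_absolutely_integrable_1) simp
  then have "(\<lambda>x::real. exp (- 2 * - x)) absolutely_integrable_on {..0}"
    using has_absolute_integral_reflect_real[of "{..0}" "{0..}" "\<lambda>x. exp (- 2 * x)"]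
    by (auto simp: image_iff intro!: exI[of _ "- _"])
  then have "(\<lambda>x::real. exp (2 * x)) absolutely_integrable_on {..<0}"
    by (auto intro: set_integrable_subset)
  then show ?thesis by (rule set_lebesgue_integral_eq_integral(1))
qed

lemma L2_neg_halfline_if_exp_bound:
  assumes cont: "continuous_on {..<0} \<psi>" and bound: "\<And>x. x < 0 \<Longrightarrow> \<bar>\<psi> x\<bar> \<le> B * exp x"
  shows "L2_neg_halfline \<psi>"
proof -
  have leb: "{..<0::real} \<in> sets lebesgue" by simp
  have "norm ((\<psi> x)\<^sup>2) \<le> B\<^sup>2 * exp (2 * x)" if "x \<in> {..<0}" for x
  proof -
    have "\<bar>\<psi> x\<bar>\<^sup>2 \<le> (B * exp x)\<^sup>2" using bound[of x] that by (intro power_mono) auto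
    then show ?thesis by (simp add: power_mult_distrib exp_double[symmetric])
  qed
  then have "set_integrable lebesgue {..<0} (\<lambda>x. (\<psi> x)\<^sup>2)"
    using integrable_on_cmult_left[OF integrable_on_exp_2x_neg_halfline, of "B\<^sup>2"]
    by (intro measurable_bounded_by_integrable_imp_absolutely_integrable[OF _ leb])
       (auto intro: continuous_imp_measurable_on_sets_lebesgue[OF continuous_on_power[OF cont] leb])
  then show ?thesis
    unfolding L2_neg_halfline_def using continuous_imp_measurable_on_sets_lebesgue[OF cont leb] by simp
qed

lemma eventually_quadratic_dominates:
  fixes a b d :: real
  assumes "a > 0"
  shows "eventually (\<lambda>t. b * t + d \<le> a * t\<^sup>2) at_top"
  using eventually_ge_at_top[of "max 1 ((\<bar>b\<bar> + \<bar>d\<bar>) / a)"]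
proof eventually_elim
  case (elim t)
  then have t: "1 \<le> t" "\<bar>b\<bar> + \<bar>d\<bar> \<le> a * t" using assms by (auto simp: field_simps)
  have "b * t \<le> \<bar>b\<bar> * t" using t(1) by (intro mult_right_mono) auto
  moreover have "d \<le> \<bar>d\<bar> * t" using t(1) mult_left_mono[of 1 t "\<bar>d\<bar>"] by simp
  ultimately have "b * t + d \<le> (\<bar>b\<bar> + \<bar>d\<bar>) * t" by (simp add: distrib_right)
  also have "\<dots> \<le> a * t\<^sup>2"
    using mult_right_mono[OF t(2), of t] t(1) by (simp add: power2_eq_square mult.assoc)
  finally show ?case .
qed

lemma confinement_parameters:
  fixes F E :: real and g :: "int \<Rightarrow> real"
  assumes F_pos: "F > 0"
    and liminf: "Liminf at_bot (\<lambda>n::int. ereal (g n / sqrt \<bar>real_of_int n\<bar>)) > ereal (- sqrt F)"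
  obtains K :: int and \<mu> :: "int \<Rightarrow> real" where "K \<ge> 1"
    and "\<And>n x. n \<le> -K \<Longrightarrow> of_int n - 1 \<le> x \<Longrightarrow> x \<le> of_int n \<Longrightarrow> (\<mu> n)\<^sup>2 + \<mu> n \<le> - (F * x + E)"
    and "\<And>n. n \<le> -K \<Longrightarrow> \<mu> n \<ge> 1"
    and "\<And>n. n \<le> -K \<Longrightarrow> \<mu> n + g n \<ge> 1"
proof -
  define s where "s n = sqrt \<bar>real_of_int n\<bar>" for n :: int
  obtain r where r: "- sqrt F < r"
    and "ereal r < Liminf at_bot (\<lambda>n::int. ereal (g n / s n))"
    using ereal_dense2[OF liminf] by (auto simp: s_def)
  then have "eventually (\<lambda>n::int. r < g n / s n) at_bot"
    by (auto dest: less_LiminfD)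
  then obtain N where N: "\<And>n. n \<le> N \<Longrightarrow> r < g n / s n"
    unfolding eventually_at_bot_linorder by blast
  \<comment> \<open>\<open>\<mu> n = c * sqrt \<bar>n\<bar>\<close> with \<open>max (- r) 0 < c < sqrt F\<close>\<close>
  define c where "c = (max (- r) 0 + sqrt F) / 2"
  have c: "0 < c" "0 < c + r" "0 < F - c\<^sup>2"
  proof -
    have "sqrt F > 0" using F_pos by simp
    then show "0 < c" "0 < c + r" using r by (auto simp: c_def max_def field_simps)
    have "c < sqrt F" using r \<open>sqrt F > 0\<close> by (auto simp: c_def max_def)
    then have "c\<^sup>2 < (sqrt F)\<^sup>2" using \<open>0 < c\<close> by (intro power_strict_mono) auto
    then show "0 < F - c\<^sup>2" using F_pos by simp
  qed
  have "eventually (\<lambda>t. 1 \<le> c * t \<and> 1 \<le> (c + r) * t \<and> c * t + E \<le> (F - c\<^sup>2) * t\<^sup>2) at_top"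
    using eventually_ge_at_top[of "1 / c"] eventually_ge_at_top[of "1 / (c + r)"]
      eventually_quadratic_dominates[OF c(3), of c E]
  proof eventually_elim
    case (elim t)
    then show ?case using c by (simp add: field_simps)
  qed
  then obtain T where T: "\<And>t. T \<le> t \<Longrightarrow> 1 \<le> c * t \<and> 1 \<le> (c + r) * t \<and> c * t + E \<le> (F - c\<^sup>2) * t\<^sup>2"
    unfolding eventually_at_top_linorder by blast
  show thesis
  proof (rule that[of "max 1 (max (- N) \<lceil>T\<^sup>2\<rceil>)" "\<lambda>n. c * s n"])
    fix n :: int assume n: "n \<le> - max 1 (max (- N) \<lceil>T\<^sup>2\<rceil>)"
    then have "T\<^sup>2 \<le> \<bar>real_of_int n\<bar>" by linarith
    then have "T \<le> s n" unfolding s_def using real_le_rsqrt by blast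
    then have cs: "1 \<le> c * s n" "1 \<le> (c + r) * s n" and quadratic: "c * s n + E \<le> (F - c\<^sup>2) * (s n)\<^sup>2"
      using T by auto
    have s_sq: "(s n)\<^sup>2 = - of_int n" and "s n > 0" using n by (auto simp: s_def)
    show "c * s n \<ge> 1" by (fact cs(1))
    have "r * s n < g n" using N[of n] n \<open>s n > 0\<close> by (simp add: field_simps)
    then show "c * s n + g n \<ge> 1" using cs(2) by (simp add: algebra_simps)
    fix x :: real assume x: "of_int n - 1 \<le> x" "x \<le> of_int n"
    have "(c * s n)\<^sup>2 + c * s n \<le> - (F * n + E)"
      using quadratic unfolding power_mult_distrib s_sq by (simp add: algebra_simps)
    also have "\<dots> \<le> - (F * x + E)" using x F_pos by simp
    finally show "(c * s n)\<^sup>2 + c * s n \<le> - (F * x + E)" .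
  qed simp
qed

section \<open>Solutions with delta interactions\<close>

context fundamental_system
begin

definition sol :: "real \<times> real \<Rightarrow> real \<Rightarrow> real" where
  "sol c x = fst c * y1 x + snd c * y2 x"

definition sol' :: "real \<times> real \<Rightarrow> real \<Rightarrow> real" where
  "sol' c x = fst c * y1' x + snd c * y2' x"

lemma sol_deriv: "(sol c has_real_derivative sol' c x) (at x)"
  unfolding sol_def[abs_def] sol'_def by (auto intro!: derivative_eq_intros y1_deriv y2_deriv)

lemma sol'_deriv: "(sol' c has_real_derivative q x * sol c x) (at x)"
  unfolding sol_def sol'_def[abs_def]
  by (auto intro!: derivative_eq_intros y1'_deriv y2'_deriv simp: algebra_simps)

lemma isCont_sol: "isCont (sol c) x"
  using sol_deriv by (rule DERIV_isCont)

lemma sol_zero [simp]: "sol 0 x = 0"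
  and sol'_zero [simp]: "sol' 0 x = 0"
  by (simp_all add: sol_def sol'_def)

lemma sol_add [simp]: "sol (c + d) x = sol c x + sol d x"
  and sol_scaleR [simp]: "sol (a *\<^sub>R c) x = a * sol c x"
  and sol'_scaleR [simp]: "sol' (a *\<^sub>R c) x = a * sol' c x"
  by (simp_all add: sol_def sol'_def algebra_simps)

lemma sol_sol'_eq_0_imp:
  assumes "sol c x = 0" "sol' c x = 0"
  shows "c = 0"
proof -
  obtain A B where c: "c = (A, B)" by (cases c)
  have "y2' x * sol c x - y2 x * sol' c x = A * (y1 x * y2' x - y1' x * y2 x)"
    and "y1 x * sol' c x - y1' x * sol c x = B * (y1 x * y2' x - y1' x * y2 x)"
    by (simp_all add: c sol_def sol'_def algebra_simps)
  then show ?thesis using assms by (simp add: c wronskian flip: zero_prod_def)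
qed

end

locale delta_system = fundamental_system +
  fixes g :: "int \<Rightarrow> real"
begin

text \<open>The solution with coefficients \<open>(y2 n, - y1 n)\<close> vanishes at \<open>n\<close>, so adding a
  multiple of it keeps \<open>\<psi>(n)\<close> and moves \<open>\<psi>'(n)\<close>.\<close>

definition jump :: "int \<Rightarrow> real \<times> real \<Rightarrow> real \<times> real" where
  "jump n c = c + (g n * sol c n) *\<^sub>R (y2 n, - y1 n)"

lemma sol_jump: "sol (jump n c) n = sol c n"
  by (simp add: jump_def sol_def algebra_simps)

lemma sol'_jump: "sol' (jump n c) n = sol' c n - g n * sol c n"
proof -
  have "sol' (jump n c) n = sol' c n - g n * sol c n * (y1 n * y2' n - y1' n * y2 n)"
    by (simp add: jump_def sol'_def algebra_simps)
  then show ?thesis by (simp add: wronskian)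
qed

lemma linear_jump: "linear (jump n)"
  by (rule linearI) (simp_all add: jump_def algebra_simps)

lemma jump_eq_0_imp:
  assumes "jump n c = 0"
  shows "c = 0"
proof -
  have "sol c n = 0" using sol_jump[of n c] assms by simp
  then show ?thesis using assms by (simp add: jump_def flip: zero_prod_def)
qed

text \<open>Coefficients of the glued solution on \<open>[m, m + 1)\<close> for \<open>m < 0\<close>: those on \<open>[-1, 0)\<close>
  are \<open>p\<close>, and crossing an integer \<open>n\<close> to the left applies \<open>jump n\<close>.\<close>

primrec coeffs_below :: "real \<times> real \<Rightarrow> nat \<Rightarrow> real \<times> real" where
  "coeffs_below p 0 = p"
| "coeffs_below p (Suc k) = jump (-1 - int k) (coeffs_below p k)"

definition coeffs :: "real \<times> real \<Rightarrow> int \<Rightarrow> real \<times> real" where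
  "coeffs p m = coeffs_below p (nat (-1 - m))"

definition glued :: "real \<times> real \<Rightarrow> real \<Rightarrow> real" where
  "glued p x = sol (coeffs p \<lfloor>x\<rfloor>) x"

lemma coeffs_top [simp]: "coeffs p (-1) = p"
  by (simp add: coeffs_def)

lemma coeffs_step:
  assumes "n \<le> -1"
  shows "coeffs p (n - 1) = jump n (coeffs p n)"
proof -
  have "nat (-1 - (n - 1)) = Suc (nat (-1 - n))" and "-1 - int (nat (-1 - n)) = n"
    using assms by simp_all
  then show ?thesis by (simp add: coeffs_def)
qed

lemma linear_coeffs: "linear (\<lambda>p. coeffs p m)"
proof -
  have "linear (\<lambda>p. coeffs_below p k)" for k
    by (induction k) (auto intro: linear_compose[unfolded o_def] linear_jump linear_id[unfolded id_def])
  then show ?thesis by (simp add: coeffs_def)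
qed

lemma coeffs_eq_0_imp: "coeffs p m = 0 \<Longrightarrow> p = 0"
proof -
  have "coeffs_below p k = 0 \<Longrightarrow> p = 0" for k
    by (induction k) (auto dest: jump_eq_0_imp)
  then show "coeffs p m = 0 \<Longrightarrow> p = 0" by (simp add: coeffs_def)
qed

lemma surj_coeffs: "surj (\<lambda>p. coeffs p m)"
  using linear_coeffs by (intro linear_injective_imp_surjective) (auto simp: linear_injective_0 coeffs_eq_0_imp)

lemma exists_coeffs_vanishing_at:
  "\<exists>p. norm p = 1 \<and> sol (coeffs p m) m = 0 \<and> sol' (coeffs p m) m > 0"
proof -
  define c where "c = (- y2 m, y1 m)"
  have sol_c: "sol c m = 0" "sol' c m = 1"
    using wronskian[of m] by (simp_all add: c_def sol_def sol'_def algebra_simps)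
  obtain p0 where p0: "coeffs p0 m = c" using surj_coeffs[of m] by (metis surjD)
  then have "p0 \<noteq> 0" using sol_c linear_0[OF linear_coeffs] by auto
  define p where "p = (1 / norm p0) *\<^sub>R p0"
  have "coeffs p m = (1 / norm p0) *\<^sub>R c"
    unfolding p_def p0[symmetric] by (rule linear_scale[OF linear_coeffs])
  then show ?thesis using \<open>p0 \<noteq> 0\<close> sol_c by (intro exI[of _ p]) (simp add: p_def)
qed

lemma glued_eq: "of_int m \<le> x \<Longrightarrow> x < of_int m + 1 \<Longrightarrow> glued p x = sol (coeffs p m) x"
  unfolding glued_def by (metis floor_unique)

lemma glued_eq_closed:
  assumes "m \<le> -2" "of_int m \<le> x" "x \<le> of_int m + 1"
  shows "glued p x = sol (coeffs p m) x"
proof (cases "x = of_int m + 1")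
  case True
  then have "glued p x = sol (coeffs p (m + 1)) (of_int (m + 1))"
    by (simp add: glued_def)
  also have "\<dots> = sol (jump (m + 1) (coeffs p (m + 1))) (of_int (m + 1))"
    by (rule sol_jump[symmetric])
  also have "jump (m + 1) (coeffs p (m + 1)) = coeffs p m"
    using coeffs_step[of "m + 1" p] assms(1) by simp
  finally show ?thesis using True by simp
qed (use assms in \<open>simp add: glued_eq\<close>)

lemma glued_deriv:
  assumes "of_int m < x" "x < of_int m + 1"
  shows "(glued p has_real_derivative sol' (coeffs p m) x) (at x)"
  by (rule has_field_derivative_transform_within_open[OF sol_deriv, where S = "{of_int m<..<of_int m + 1}"])
     (use assms in \<open>auto simp: glued_eq[of m]\<close>)

lemma deriv_glued:
  "of_int m < x \<Longrightarrow> x < of_int m + 1 \<Longrightarrow> deriv (glued p) x = sol' (coeffs p m) x"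
  by (rule DERIV_imp_deriv[OF glued_deriv])

lemma glued_ode:
  assumes "x \<notin> \<int>"
  shows "glued p differentiable (at x)"
    and "(deriv (glued p) has_real_derivative q x * glued p x) (at x)"
proof -
  define m where "m = \<lfloor>x\<rfloor>"
  have m: "of_int m < x" "x < of_int m + 1"
    using assms of_int_floor_le[of x] real_of_int_floor_add_one_gt[of x]
    by (auto simp: m_def order.order_iff_strict)
  show "glued p differentiable (at x)"
    using glued_deriv[OF m] real_differentiable_def by blast
  have "(deriv (glued p) has_real_derivative q x * sol (coeffs p m) x) (at x)"
    by (rule has_field_derivative_transform_within_open[OF sol'_deriv, where S = "{of_int m<..<of_int m + 1}"])
       (use m in \<open>auto simp: deriv_glued\<close>)
  then show "(deriv (glued p) has_real_derivative q x * glued p x) (at x)"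
    using m by (simp add: glued_eq[of m])
qed

lemma isCont_glued:
  assumes "x < 0"
  shows "isCont (glued p) x"
proof (cases "x \<in> \<int>")
  case True
  then obtain n where n: "x = of_int n" "n \<le> -1" using assms by (auto elim!: Ints_cases)
  have "continuous_on {of_int n - 1..of_int n} (glued p)"
  proof (rule continuous_on_eq)
    show "continuous_on {of_int n - 1..of_int n} (sol (coeffs p (n - 1)))"
      by (intro continuous_at_imp_continuous_on ballI isCont_sol)
    fix y :: real assume "y \<in> {of_int n - 1..of_int n}"
    then show "sol (coeffs p (n - 1)) y = glued p y"
      using n glued_eq_closed[of "n - 1" y p] by simp
  qed
  moreover have "continuous_on {of_int n..of_int n + 1 / 2} (glued p)"
  proof (rule continuous_on_eq)
    show "continuous_on {of_int n..of_int n + 1 / 2} (sol (coeffs p n))"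
      by (intro continuous_at_imp_continuous_on ballI isCont_sol)
    fix y :: real assume "y \<in> {of_int n..of_int n + 1 / 2}"
    then show "sol (coeffs p n) y = glued p y"
      using glued_eq[of n y p] by simp
  qed
  ultimately have "continuous_on ({of_int n - 1..of_int n} \<union> {of_int n..of_int n + 1 / 2}) (glued p)"
    by (intro continuous_on_closed_Un) auto
  moreover have "x \<in> interior ({of_int n - 1..of_int n} \<union> {of_int n..of_int n + 1 / 2})"
    using n by (simp add: ivl_disj_un_two_touch)
  ultimately show ?thesis by (rule continuous_on_interior)
next
  case False
  then show ?thesis by (intro differentiable_imp_continuous_within glued_ode(1))
qed

lemma glued_jump:
  assumes "n \<le> -1"
  shows "((\<lambda>\<epsilon>. deriv (glued p) (of_int n + \<epsilon>) - deriv (glued p) (of_int n - \<epsilon>))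
           \<longlongrightarrow> g n * glued p (of_int n)) (at_right 0)"
proof -
  let ?right = "sol' (coeffs p n)" and ?left = "sol' (coeffs p (n - 1))"
  have ev: "eventually (\<lambda>\<epsilon>. deriv (glued p) (of_int n + \<epsilon>) - deriv (glued p) (of_int n - \<epsilon>)
          = ?right (of_int n + \<epsilon>) - ?left (of_int n - \<epsilon>)) (at_right 0)"
    using eventually_at_right_real[OF zero_less_one]
  proof eventually_elim
    case (elim \<epsilon>)
    then have "deriv (glued p) (of_int n + \<epsilon>) = ?right (of_int n + \<epsilon>)"
      and "deriv (glued p) (of_int n - \<epsilon>) = ?left (of_int n - \<epsilon>)"
      by (auto intro!: deriv_glued)
    then show ?case by simp
  qed
  have isCont_sol': "isCont (sol' c) x" for c x
    using sol'_deriv by (rule DERIV_isCont)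
  have "((\<lambda>\<epsilon>. ?right (of_int n + \<epsilon>) - ?left (of_int n - \<epsilon>))
      \<longlongrightarrow> ?right n - ?left n) (at_right 0)"
    by (intro tendsto_diff isCont_tendsto_compose[OF isCont_sol'] tendsto_eq_intros) auto
  moreover have "?right n - ?left n = g n * glued p (of_int n)"
    using assms by (simp add: coeffs_step sol'_jump glued_def)
  ultimately show ?thesis using tendsto_cong[OF ev] by simp
qed

lemma glued_nontrivial:
  assumes "p \<noteq> 0"
  shows "\<exists>x<0. glued p x \<noteq> 0"
proof (rule ccontr)
  assume "\<not> (\<exists>x<0. glued p x \<noteq> 0)"
  then have vanish: "sol p x = 0" if "x \<in> {-1<..<0}" for x
    using that glued_eq[of "-1" x p] by auto
  have "(sol p has_real_derivative 0) (at (-1/2))"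
    by (rule has_field_derivative_transform_within_open[OF DERIV_const, where S = "{-1<..<0}"])
       (use vanish in auto)
  then have "sol' p (-1/2) = 0" using sol_deriv DERIV_unique by blast
  then have "p = 0" using vanish[of "-1/2"] by (intro sol_sol'_eq_0_imp) auto
  with assms show False ..
qed

lemma continuous_glued_coeffs: "continuous_on UNIV (\<lambda>p. glued p x)"
proof -
  have "linear (\<lambda>p. glued p x)"
    using linear_coeffs[of "\<lfloor>x\<rfloor>"] by (auto simp: glued_def linear_iff)
  then show ?thesis by (simp add: linear_continuous_on linear_linear)
qed

end

locale confining_system = delta_system +
  fixes K :: int and \<mu> :: "int \<Rightarrow> real"
  assumes K_pos: "K \<ge> 1"
    and q_lower: "\<And>n x. n \<le> -K \<Longrightarrow> of_int n - 1 \<le> x \<Longrightarrow> x \<le> of_int n \<Longrightarrow> (\<mu> n)\<^sup>2 + \<mu> n \<le> q x"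
    and \<mu>_ge_1: "\<And>n. n \<le> -K \<Longrightarrow> 1 \<le> \<mu> n"
    and \<mu>_plus_g: "\<And>n. n \<le> -K \<Longrightarrow> 1 \<le> \<mu> n + g n"
begin

lemma riccati_step:
  assumes m: "m \<le> -K - 1" and start: "0 \<le> sol c m" "sol c m < sol' c m"
  shows "exp_decaying_on {of_int m..of_int m + 1} (sol c)"
    and "\<mu> (m + 1) * sol c (of_int m + 1) < sol' c (of_int m + 1)"
proof -
  have q: "(\<mu> (m + 1))\<^sup>2 + \<mu> (m + 1) \<le> q x" if "of_int m \<le> x" "x \<le> of_int m + 1" for x
    using q_lower[of "m + 1" x] m that by simp
  have \<mu>: "1 \<le> \<mu> (m + 1)" using \<mu>_ge_1[of "m + 1"] m by simp
  note ramp = riccati_comparison[of "sol c" "sol' c" q, OF sol_deriv sol'_deriv \<mu> q start]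
  show "exp_decaying_on {of_int m..of_int m + 1} (sol c)"
  proof (rule exp_decaying_on_if_le_deriv[OF sol_deriv])
    fix x :: real assume x: "x \<in> {of_int m..of_int m + 1}"
    then have "0 \<le> sol c x" "(1 + (\<mu> (m + 1) - 1) * (x - of_int m)) * sol c x < sol' c x"
      using ramp[of x] by auto
    moreover have "1 \<le> 1 + (\<mu> (m + 1) - 1) * (x - of_int m)" using x \<mu> by simp
    then have "1 * sol c x \<le> (1 + (\<mu> (m + 1) - 1) * (x - of_int m)) * sol c x"
      using \<open>0 \<le> sol c x\<close> by (rule mult_right_mono)
    ultimately show "0 \<le> sol c x \<and> sol c x \<le> sol' c x" by simp
  qed
  show "\<mu> (m + 1) * sol c (of_int m + 1) < sol' c (of_int m + 1)"
    using ramp[of "of_int m + 1"] by simp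
qed

lemma rising_at_integers:
  assumes init: "sol (coeffs p (- N)) (- N) = 0" "0 < sol' (coeffs p (- N)) (- N)"
    and m: "- N \<le> m" "m \<le> -K - 1"
  shows "0 \<le> sol (coeffs p m) m \<and> sol (coeffs p m) m < sol' (coeffs p m) m"
  using m
proof (induction m rule: int_ge_induct)
  case base
  then show ?case using init by simp
next
  case (step m)
  let ?c = "coeffs p m" and ?c' = "coeffs p (m + 1)"
  have m: "m \<le> -K - 1" using step.prems by simp
  then have IH: "0 \<le> sol ?c m" "sol ?c m < sol' ?c m" using step.IH by auto
  have "coeffs p (m + 1 - 1) = jump (m + 1) ?c'" using m K_pos by (intro coeffs_step) simp
  then have c: "?c = jump (m + 1) ?c'" by simp
  have "0 \<le> sol ?c (of_int m + 1)"
    using riccati_step(1)[OF m IH] by (auto simp: exp_decaying_on_def)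
  then have sol_nonneg: "0 \<le> sol ?c' (m + 1)" using sol_jump[of "m + 1" ?c'] c by simp
  have "\<mu> (m + 1) * sol ?c' (m + 1) < sol' ?c' (m + 1) - g (m + 1) * sol ?c' (m + 1)"
    using riccati_step(2)[OF m IH] sol_jump[of "m + 1" ?c'] sol'_jump[of "m + 1" ?c'] c by simp
  moreover have "1 \<le> \<mu> (m + 1) + g (m + 1)" using \<mu>_plus_g[of "m + 1"] step.prems by simp
  then have "1 * sol ?c' (m + 1) \<le> (\<mu> (m + 1) + g (m + 1)) * sol ?c' (m + 1)"
    using sol_nonneg by (rule mult_right_mono)
  ultimately show ?case using sol_nonneg by (simp add: algebra_simps)
qed

lemma exp_decaying_glued_from:
  assumes N: "N \<ge> K + 1" and init: "sol (coeffs p (- N)) (- N) = 0" "0 < sol' (coeffs p (- N)) (- N)"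
  shows "exp_decaying_on {- of_int N..- of_int K} (glued p)"
proof -
  have "exp_decaying_on {of_int m..of_int m + 1} (glued p)" if m: "- N \<le> m" "m < - K" for m
  proof (rule exp_decaying_on_cong)
    show "exp_decaying_on {of_int m..of_int m + 1} (sol (coeffs p m))"
      using rising_at_integers[OF init, of m] m by (intro riccati_step(1)) auto
    show "sol (coeffs p m) x = glued p x" if "x \<in> {of_int m..of_int m + 1}" for x
      using glued_eq_closed[of m x p] that m K_pos by simp
  qed
  then show ?thesis
    using exp_decaying_on_integer_pieces[of "- N" "- K" "glued p"] N by simp
qed

lemma closed_exp_decaying_glued: "closed {p. exp_decaying_on S (glued p)}"
  unfolding exp_decaying_on_def mono_on_def Ball_def
  by (intro closed_Collect_conj closed_Collect_all closed_Collect_imp open_Collect_const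
        closed_Collect_le continuous_intros continuous_glued_coeffs)

lemma exists_exp_decaying_glued: "\<exists>p. p \<noteq> 0 \<and> exp_decaying_on {..- of_int K} (glued p)"
proof -
  define S where "S i = {- real_of_int (K + 1 + int i)..- real_of_int K}" for i
  define D where "D i = sphere 0 1 \<inter> {p. exp_decaying_on (S i) (glued p)}" for i
  have "\<Inter> (range D) \<noteq> {}"
  proof (rule compact_nest)
    show "compact (D i)" for i
      unfolding D_def by (intro compact_Int_closed compact_sphere closed_exp_decaying_glued)
    show "D j \<subseteq> D i" if "i \<le> j" for i j
      using that by (auto simp: D_def S_def intro: exp_decaying_on_subset)
    show "D i \<noteq> {}" for i
    proof -
      define N where "N = K + 1 + int i"
      obtain p where "norm p = 1" "sol (coeffs p (- N)) (- N) = 0" "0 < sol' (coeffs p (- N)) (- N)"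
        using exists_coeffs_vanishing_at by blast
      then have "p \<in> D i"
        using exp_decaying_glued_from[of N p] unfolding D_def S_def N_def by simp
      then show ?thesis by blast
    qed
  qed
  then obtain p where p: "p \<in> sphere 0 1" "\<And>i. exp_decaying_on (S i) (glued p)"
    unfolding D_def by blast
  have "exp_decaying_on {..- of_int K} (glued p)"
    unfolding exp_decaying_on_def
  proof (intro conjI ballI mono_onI)
    fix x :: real assume "x \<in> {..- of_int K}"
    then have "x \<in> S (nat \<lceil>- x\<rceil>)" using K_pos by (auto simp: S_def) linarith
    then show "0 \<le> glued p x" using p(2) by (auto simp: exp_decaying_on_def)
  next
    fix x y :: real assume "x \<in> {..- of_int K}" "y \<in> {..- of_int K}" "x \<le> y"
    then have "x \<in> S (nat \<lceil>- x\<rceil>)" "y \<in> S (nat \<lceil>- x\<rceil>)" using K_pos by (auto simp: S_def) linarith+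
    then show "exp (- x) * glued p x \<le> exp (- y) * glued p y"
      using p(2) \<open>x \<le> y\<close> by (auto simp: exp_decaying_on_def mono_on_def)
  qed
  moreover have "p \<noteq> 0" using p(1) by auto
  ultimately show ?thesis by blast
qed

lemma bounded_glued_near_0: "bounded (glued p ` {a..<0})"
proof -
  have "glued p ` {a..<0} \<subseteq> glued p ` {a..-1} \<union> sol p ` {-1..0}"
  proof (rule image_subsetI)
    fix x assume x: "x \<in> {a..<0}"
    show "glued p x \<in> glued p ` {a..-1} \<union> sol p ` {-1..0}"
    proof (cases "x \<le> -1")
      case False
      then have "glued p x = sol p x" using x glued_eq[of "-1" x p] by simp
      then show ?thesis using False x by auto
    qed (use x in auto)
  qed
  moreover have "compact (glued p ` {a..-1})"
    by (intro compact_continuous_image continuous_at_imp_continuous_on ballI isCont_glued) auto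
  moreover have "compact (sol p ` {-1..0})"
    by (intro compact_continuous_image continuous_at_imp_continuous_on ballI isCont_sol) auto
  ultimately show ?thesis by (meson bounded_Un bounded_subset compact_imp_bounded)
qed

lemma glued_exp_bound:
  assumes decay: "exp_decaying_on {..- of_int K} (glued p)"
  obtains B where "\<And>x. x < 0 \<Longrightarrow> \<bar>glued p x\<bar> \<le> B * exp x"
proof -
  obtain M where M: "\<And>x. x \<in> {- of_int K..<0} \<Longrightarrow> \<bar>glued p x\<bar> \<le> M"
    using bounded_glued_near_0[of p "- of_int K"] unfolding bounded_real by blast
  define B where "B = exp (of_int K) * max M (glued p (- of_int K))"
  show thesis
  proof (rule that)
    fix x :: real assume "x < 0"
    show "\<bar>glued p x\<bar> \<le> B * exp x"
    proof (cases "x \<le> - of_int K")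
      case True
      then have "0 \<le> glued p x" "exp (- x) * glued p x \<le> exp (- (- of_int K)) * glued p (- of_int K)"
        using decay mono_onD[of "{..- of_int K}" "\<lambda>x. exp (- x) * glued p x" x "- of_int K"]
        by (auto simp: exp_decaying_on_def)
      have "\<bar>glued p x\<bar> = exp x * (exp (- x) * glued p x)"
        using \<open>0 \<le> glued p x\<close> by (simp add: exp_minus)
      also have "\<dots> \<le> exp x * (exp (of_int K) * glued p (- of_int K))"
        using \<open>exp (- x) * glued p x \<le> _\<close> by (intro mult_left_mono) auto
      also have "\<dots> \<le> B * exp x"
        by (simp add: B_def mult.commute mult_left_mono)
      finally show ?thesis .
    next
      case False
      then have "\<bar>glued p x\<bar> \<le> M" using M \<open>x < 0\<close> by simp
      moreover have "1 \<le> exp (of_int K) * exp x" using False by (simp flip: exp_add)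
      ultimately have "\<bar>glued p x\<bar> \<le> M * (exp (of_int K) * exp x)"
        by (metis abs_ge_zero mult.right_neutral mult_left_mono order_trans)
      also have "\<dots> \<le> B * exp x" by (simp add: B_def mult_right_mono)
      finally show ?thesis .
    qed
  qed
qed

lemma exists_L2_solution:
  "\<exists>\<psi>. L2_neg_halfline \<psi> \<and> (\<exists>x<0. \<psi> x \<noteq> 0) \<and>
      (\<forall>x. x < 0 \<and> x \<notin> \<int> \<longrightarrow> \<psi> differentiable (at x) \<and>
           (deriv \<psi> has_real_derivative q x * \<psi> x) (at x)) \<and>
      (\<forall>n::int. n < 0 \<longrightarrow> isCont \<psi> (of_int n)) \<and>
      (\<forall>n::int. n < 0 \<longrightarrow> ((\<lambda>\<epsilon>. deriv \<psi> (of_int n + \<epsilon>) - deriv \<psi> (of_int n - \<epsilon>))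
           \<longlongrightarrow> g n * \<psi> (of_int n)) (at_right 0))"
proof -
  obtain p where "p \<noteq> 0" and decay: "exp_decaying_on {..- of_int K} (glued p)"
    using exists_exp_decaying_glued by blast
  obtain B where "\<And>x. x < 0 \<Longrightarrow> \<bar>glued p x\<bar> \<le> B * exp x"
    using glued_exp_bound[OF decay] by blast
  then have "L2_neg_halfline (glued p)"
    by (intro L2_neg_halfline_if_exp_bound continuous_at_imp_continuous_on ballI isCont_glued) auto
  then show ?thesis
    using glued_nontrivial[OF \<open>p \<noteq> 0\<close>] glued_ode isCont_glued glued_jump
    by (intro exI[of _ "glued p"]) auto
qed

end

theorem lemma2p2:
  fixes F :: real and g :: "int \<Rightarrow> real"
  assumes F_pos: "F > 0"
    and liminf: "Liminf at_bot (\<lambda>n::int. ereal (g n / sqrt \<bar>real_of_int n\<bar>)) > ereal (- sqrt F)"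
  shows "\<forall>E::real. \<exists>\<psi> :: real \<Rightarrow> real.
           L2_neg_halfline \<psi> \<and>
           (\<exists>x<0. \<psi> x \<noteq> 0) \<and>
           (\<forall>x. x < 0 \<and> x \<notin> \<int> \<longrightarrow>
               \<psi> differentiable (at x) \<and>
               (deriv \<psi> has_real_derivative (- (F * x + E) * \<psi> x)) (at x)) \<and>
           (\<forall>n::int. n < 0 \<longrightarrow> isCont \<psi> (real_of_int n)) \<and>
           (\<forall>n::int. n < 0 \<longrightarrow>
               ((\<lambda>\<epsilon>. deriv \<psi> (real_of_int n + \<epsilon>) - deriv \<psi> (real_of_int n - \<epsilon>))
                  \<longlongrightarrow> g n * \<psi> (real_of_int n)) (at_right 0))"
proof (rule allI, goal_cases)
  case (1 E)
  interpret fundamental_system "\<lambda>x. - (F * x + E)"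
    "\<lambda>x. airy_series F 1 0 (x + E / F)" "\<lambda>x. airy_series' F 1 0 (x + E / F)"
    "\<lambda>x. airy_series F 0 1 (x + E / F)" "\<lambda>x. airy_series' F 0 1 (x + E / F)"
    using F_pos by (intro airy_fundamental_system) simp
  obtain K \<mu> where K: "K \<ge> 1"
    "\<And>n x. n \<le> -K \<Longrightarrow> of_int n - 1 \<le> x \<Longrightarrow> x \<le> of_int n \<Longrightarrow> (\<mu> n)\<^sup>2 + \<mu> n \<le> - (F * x + E)"
    "\<And>n. n \<le> -K \<Longrightarrow> 1 \<le> \<mu> n" "\<And>n. n \<le> -K \<Longrightarrow> 1 \<le> \<mu> n + g n"
    using confinement_parameters[OF F_pos liminf] by metis
  interpret confining_system "\<lambda>x. - (F * x + E)"
    "\<lambda>x. airy_series F 1 0 (x + E / F)" "\<lambda>x. airy_series' F 1 0 (x + E / F)"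
    "\<lambda>x. airy_series F 0 1 (x + E / F)" "\<lambda>x. airy_series' F 0 1 (x + E / F)" g K \<mu>
    by (intro confining_system.intro delta_system.intro fundamental_system_axioms
        confining_system_axioms.intro) (use K in auto)
  show ?case using exists_L2_solution by simp
qed

end
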